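(* Let $\alpha>0$, $1<p<\infty$, $\frac1p+\frac1{p'}=1$, and let $\mathcal{G}_\alpha=\left\{z\mapsto\exp\left(\alpha az+\frac{\alpha}{2}cz^2\right)\colon a,c\in\mathbb C,\ |c|<1\right\}$ (functions on $\mathbb C$). Then \[ \sup_{g,h\in\mathcal{G}_\alpha}\mathcal{R}_{p,\alpha}(g,h)=\sqrt{C_p},\qquad \mathcal{R}_{p,\alpha}(g,h)=\frac{|\langle g,h\rangle_\alpha|}{\|g\|_{p,\alpha}\|h\|_{p',\alpha}}. \]
   Context: For $\alpha>0$, $\gamma^1_\alpha(dz)=(\alpha/\pi)e^{-\alpha|z|^2}\lambda(dz)$ on $\mathbb C$, with $\lambda$ Lebesgue measure. For $1\le q<\infty$, $\|f\|_{q,\alpha}:=\left(\int_{\mathbb C}|f|^q\,d\gamma^1_{\alpha q/2}\right)^{1/q}$. $\langle f,g\rangle_\alpha=\int_{\mathbb C} f\overline g\,d\gamma^1_\alpha$. $C_p=2\,p^{-1/p}\,(p')^{-1/p'}$. *)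

theory Defs
  imports "HOL-Analysis.Analysis"
begin

definition gauss_dens :: "real \<Rightarrow> complex \<Rightarrow> real" where
  "gauss_dens \<alpha> z = (\<alpha> / pi) * exp (- \<alpha> * (cmod z)\<^sup>2)"

definition gnorm :: "real \<Rightarrow> real \<Rightarrow> (complex \<Rightarrow> complex) \<Rightarrow> real" where
  "gnorm q \<alpha> f = (\<integral> z. (cmod (f z)) powr q * gauss_dens (\<alpha> * q / 2) z \<partial>lborel) powr (1 / q)"

definition ginner :: "real \<Rightarrow> (complex \<Rightarrow> complex) \<Rightarrow> (complex \<Rightarrow> complex) \<Rightarrow> complex" where
  "ginner \<alpha> f g = (\<integral> z. complex_of_real (gauss_dens \<alpha> z) * (f z * cnj (g z)) \<partial>lborel)"

definition conj_exp :: "real \<Rightarrow> real" where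
  "conj_exp p = p / (p - 1)"

definition Cp :: "real \<Rightarrow> real" where
  "Cp p = 2 * p powr (- 1 / p) * (conj_exp p) powr (- 1 / conj_exp p)"

definition gaussians :: "real \<Rightarrow> (complex \<Rightarrow> complex) set" where
  "gaussians \<alpha> = {(\<lambda>z. exp (complex_of_real \<alpha> * a * z + complex_of_real (\<alpha> / 2) * c * z\<^sup>2)) | a c. cmod c < 1}"

definition Rratio :: "real \<Rightarrow> real \<Rightarrow> (complex \<Rightarrow> complex) \<Rightarrow> (complex \<Rightarrow> complex) \<Rightarrow> real" where
  "Rratio p \<alpha> g h = cmod (ginner \<alpha> g h) / (gnorm p \<alpha> g * gnorm (conj_exp p) \<alpha> h)"

end

theory Submission
  imports Defs "HOL-Probability.Characteristic_Functions"
begin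

text \<open>
  For \<open>g = exp (\<alpha> a z + \<alpha>/2 c z^2)\<close> all quantities in the ratio are Gaussian integrals over
  \<open>\<complex> = \<real>^2\<close>. With \<open>\<Phi> w e\<close> the maximum of \<open>Re (w z) + Re (e z^2) - |z|^2\<close> one gets
  \<open>\<parallel>g\<parallel>_{q,\<alpha>} = exp (2 \<alpha> \<Phi> a c) (1 - |c|^2)^(-1/(2q))\<close>, and
  \<open>|\<langle>g, h\<rangle>_\<alpha>| \<le> \<integral> |g h| d\<gamma>_\<alpha> = exp (\<alpha> \<Phi> (a + b) ((c + d)/2)) (1 - |(c + d)/2|^2)^(-1/2)\<close>.
  Halving a maximiser shows \<open>\<Phi> (a + b) ((c + d)/2) \<le> 2 \<Phi> a c + 2 \<Phi> b d\<close>, so the exponentials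
  are dominated by those of the norms. Concavity of \<open>1 - |c|^2\<close> and the weighted AM-GM inequality
  \<open>X^(1/p) Y^(1/p') \<le> C_p (X + Y)/2\<close> bound the remaining factor by \<open>\<surd>C_p\<close>.
  For sharpness take \<open>a = b = 0\<close> and real \<open>c = 1 - t/p\<close>, \<open>d = 1 - t/p'\<close>: then
  \<open>\<langle>g, h\<rangle>_\<alpha> = (1 - c d)^(-1/2)\<close> exactly (a Fourier transform of a Gaussian), and the ratio
  tends to \<open>\<surd>C_p\<close> as \<open>t \<rightarrow> 0\<close>.
\<close>

section \<open>Gaussian integrals\<close>

lemma measurable_Complex_pair [measurable]:
  "(\<lambda>x. Complex (fst x) (snd x)) \<in> lborel \<Otimes>\<^sub>M lborel \<rightarrow>\<^sub>M borel"
  unfolding Complex_eq by measurable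

lemma distr_pair_lborel_Complex:
  "distr (lborel \<Otimes>\<^sub>M lborel) borel (\<lambda>x. Complex (fst x) (snd x)) = (lborel :: complex measure)"
proof (rule lborel_eqI[symmetric])
  fix l u :: complex
  assume lu: "\<And>b. b \<in> Basis \<Longrightarrow> l \<bullet> b \<le> u \<bullet> b"
  have le: "Re l \<le> Re u" "Im l \<le> Im u" using lu[of 1] lu[of \<i>] by (auto simp: Basis_complex_def)
  have "(\<lambda>x. Complex (fst x) (snd x)) -` box l u \<inter> space (lborel \<Otimes>\<^sub>M lborel)
        = box (Re l) (Re u) \<times> box (Im l) (Im u)"
    by (auto simp: box_def Basis_complex_def space_pair_measure)
  then have "emeasure (distr (lborel \<Otimes>\<^sub>M lborel) borel (\<lambda>x. Complex (fst x) (snd x))) (box l u)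
      = emeasure (lborel \<Otimes>\<^sub>M lborel) (box (Re l) (Re u) \<times> box (Im l) (Im u))"
    by (simp add: emeasure_distr)
  also have "\<dots> = ennreal ((Re u - Re l) * (Im u - Im l))"
    using le by (simp add: lborel.emeasure_pair_measure_Times ennreal_mult)
  also have "\<dots> = (\<Prod>b\<in>Basis. (u - l) \<bullet> b)"
    by (simp add: Basis_complex_def)
  finally show "emeasure (distr (lborel \<Otimes>\<^sub>M lborel) borel (\<lambda>x. Complex (fst x) (snd x))) (box l u) = (\<Prod>b\<in>Basis. (u - l) \<bullet> b)" .
qed simp

lemma nn_integral_lborel_complex:
  assumes [measurable]: "f \<in> borel_measurable borel"
  shows "(\<integral>\<^sup>+z. f z \<partial>lborel) = (\<integral>\<^sup>+x. \<integral>\<^sup>+y. f (Complex x y) \<partial>lborel \<partial>lborel)"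
proof -
  have "(\<integral>\<^sup>+z. f z \<partial>lborel) = (\<integral>\<^sup>+z. f z \<partial>distr (lborel \<Otimes>\<^sub>M lborel) borel (\<lambda>x. Complex (fst x) (snd x)))"
    by (simp add: distr_pair_lborel_Complex)
  also have "\<dots> = (\<integral>\<^sup>+p. f (Complex (fst p) (snd p)) \<partial>(lborel \<Otimes>\<^sub>M lborel))"
    by (rule nn_integral_distr[OF measurable_Complex_pair]) simp
  also have "\<dots> = (\<integral>\<^sup>+x. \<integral>\<^sup>+y. f (Complex x y) \<partial>lborel \<partial>lborel)"
    by (rule lborel.nn_integral_fst[symmetric, where f="\<lambda>p. f (Complex (fst p) (snd p))", simplified])
       simp
  finally show ?thesis .
qed

lemma integral_lborel_complex:
  fixes F :: "complex \<Rightarrow> complex"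
  assumes [measurable]: "F \<in> borel_measurable borel"
    and int: "integrable (lborel \<Otimes>\<^sub>M lborel) (\<lambda>p. F (Complex (fst p) (snd p)))"
  shows "(\<integral>z. F z \<partial>lborel) = (\<integral>x. (\<integral>y. F (Complex x y) \<partial>lborel) \<partial>lborel)"
proof -
  have "(\<integral>z. F z \<partial>lborel) = (\<integral>z. F z \<partial>distr (lborel \<Otimes>\<^sub>M lborel) borel (\<lambda>x. Complex (fst x) (snd x)))"
    by (simp add: distr_pair_lborel_Complex)
  also have "\<dots> = (\<integral>p. F (Complex (fst p) (snd p)) \<partial>(lborel \<Otimes>\<^sub>M lborel))"
    by (rule integral_distr[OF measurable_Complex_pair]) simp
  also have "\<dots> = (\<integral>x. (\<integral>y. F (Complex x y) \<partial>lborel) \<partial>lborel)"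
    using lborel_pair.integral_fst'[OF int] by simp
  finally show ?thesis .
qed

lemma has_bochner_integral_exp_quadratic:
  fixes a b :: real
  assumes a: "a > 0"
  shows "has_bochner_integral lborel (\<lambda>x. exp (- a * x\<^sup>2 + b * x)) (sqrt (pi / a) * exp (b\<^sup>2 / (4 * a)))"
proof -
  define K where "K = sqrt (pi / a) * exp (b\<^sup>2 / (4 * a))"
  define \<mu> where "\<mu> = b / (2 * a)"
  define \<sigma> where "\<sigma> = 1 / sqrt (2 * a)"
  have \<sigma>: "\<sigma> > 0" and \<sigma>2: "\<sigma>\<^sup>2 = 1 / (2 * a)"
    using a by (simp_all add: \<sigma>_def power_divide)
  have density: "exp (- a * x\<^sup>2 + b * x) = K * normal_density \<mu> \<sigma> x" for x
  proof -
    have "K * normal_density \<mu> \<sigma> x = exp (b\<^sup>2 / (4 * a)) * exp (- a * (x - \<mu>)\<^sup>2)"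
      unfolding K_def normal_density_def \<sigma>2 using a by (simp add: field_simps)
    also have "\<dots> = exp (- a * x\<^sup>2 + b * x)"
      unfolding mult_exp_exp using a by (simp add: \<mu>_def field_simps power2_eq_square)
    finally show ?thesis ..
  qed
  have "has_bochner_integral lborel (\<lambda>x. K * normal_density \<mu> \<sigma> x) (K * 1)"
    using \<sigma> by (intro has_bochner_integral_mult_right)
      (simp add: has_bochner_integral_iff integrable_normal_density integral_normal_density)
  then show ?thesis
    unfolding density K_def by simp
qed

lemma nn_integral_exp_quadratic:
  fixes a b :: real
  assumes a: "a > 0"
  shows "(\<integral>\<^sup>+x. ennreal (exp (- a * x\<^sup>2 + b * x)) \<partial>lborel) = ennreal (sqrt (pi / a) * exp (b\<^sup>2 / (4 * a)))"
  using has_bochner_integral_exp_quadratic[OF a] by (simp add: has_bochner_integral_iff nn_integral_eq_integral)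

lemma nn_integral_exp_quadratic_form:
  fixes A B C D E :: real
  assumes B: "B > 0" and det: "A * B - C\<^sup>2 > 0"
  shows "(\<integral>\<^sup>+x. \<integral>\<^sup>+y. ennreal (exp (- (A * x\<^sup>2 + 2 * C * x * y + B * y\<^sup>2) + D * x + E * y)) \<partial>lborel \<partial>lborel)
       = ennreal (pi / sqrt (A * B - C\<^sup>2)
                  * exp ((B * D\<^sup>2 - 2 * C * D * E + A * E\<^sup>2) / (4 * (A * B - C\<^sup>2))))"
proof -
  define a where "a = (A * B - C\<^sup>2) / B"
  define b where "b = (D * B - C * E) / B"
  define K where "K = sqrt (pi / B) * exp (E\<^sup>2 / (4 * B))"
  have a: "a > 0"
    using det B by (simp add: a_def)
  have inner: "(\<integral>\<^sup>+y. ennreal (exp (- (A * x\<^sup>2 + 2 * C * x * y + B * y\<^sup>2) + D * x + E * y)) \<partial>lborel)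
      = ennreal K * ennreal (exp (- a * x\<^sup>2 + b * x))" for x
  proof -
    have "(\<integral>\<^sup>+y. ennreal (exp (- (A * x\<^sup>2 + 2 * C * x * y + B * y\<^sup>2) + D * x + E * y)) \<partial>lborel)
        = (\<integral>\<^sup>+y. ennreal (exp (- A * x\<^sup>2 + D * x)) * ennreal (exp (- B * y\<^sup>2 + (E - 2 * C * x) * y)) \<partial>lborel)"
      by (intro nn_integral_cong) (simp add: ennreal_mult'[symmetric] mult_exp_exp algebra_simps power2_eq_square)
    also have "\<dots> = ennreal (exp (- A * x\<^sup>2 + D * x))
                      * (\<integral>\<^sup>+y. ennreal (exp (- B * y\<^sup>2 + (E - 2 * C * x) * y)) \<partial>lborel)"
      by (simp add: nn_integral_cmult)
    also have "\<dots> = ennreal (exp (- A * x\<^sup>2 + D * x) * (sqrt (pi / B) * exp ((E - 2 * C * x)\<^sup>2 / (4 * B))))"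
      by (subst nn_integral_exp_quadratic[OF B]) (simp add: ennreal_mult'[symmetric])
    also have "- A * x\<^sup>2 + D * x + (E - 2 * C * x)\<^sup>2 / (4 * B) = E\<^sup>2 / (4 * B) + (- a * x\<^sup>2 + b * x)"
      using B by (simp add: a_def b_def field_simps power2_eq_square)
    then have "exp (- A * x\<^sup>2 + D * x) * (sqrt (pi / B) * exp ((E - 2 * C * x)\<^sup>2 / (4 * B)))
        = K * exp (- a * x\<^sup>2 + b * x)"
      by (simp add: K_def mult_exp_exp mult_ac)
    finally show ?thesis
      using B by (simp add: K_def ennreal_mult)
  qed
  have "(\<integral>\<^sup>+x. \<integral>\<^sup>+y. ennreal (exp (- (A * x\<^sup>2 + 2 * C * x * y + B * y\<^sup>2) + D * x + E * y)) \<partial>lborel \<partial>lborel)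
      = ennreal K * (\<integral>\<^sup>+x. ennreal (exp (- a * x\<^sup>2 + b * x)) \<partial>lborel)"
    unfolding inner by (rule nn_integral_cmult) simp
  also have "\<dots> = ennreal (K * (sqrt (pi / a) * exp (b\<^sup>2 / (4 * a))))"
    unfolding nn_integral_exp_quadratic[OF a] using B by (simp add: K_def ennreal_mult'[symmetric])
  also have "K * (sqrt (pi / a) * exp (b\<^sup>2 / (4 * a)))
      = pi / sqrt (A * B - C\<^sup>2) * exp ((B * D\<^sup>2 - 2 * C * D * E + A * E\<^sup>2) / (4 * (A * B - C\<^sup>2)))"
  proof -
    have "pi / B * (pi / a) = pi\<^sup>2 / (A * B - C\<^sup>2)"
      using B det by (simp add: a_def field_simps power2_eq_square)
    then have sqrt_eq: "sqrt (pi / B) * sqrt (pi / a) = pi / sqrt (A * B - C\<^sup>2)"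
      by (metis real_sqrt_mult real_sqrt_divide real_sqrt_abs abs_of_nonneg pi_ge_zero)
    have exponent_eq: "E\<^sup>2 / (4 * B) + b\<^sup>2 / (4 * a) = (B * D\<^sup>2 - 2 * C * D * E + A * E\<^sup>2) / (4 * (A * B - C\<^sup>2))"
      using B det by (simp add: a_def b_def field_simps power2_eq_square)
    have "K * (sqrt (pi / a) * exp (b\<^sup>2 / (4 * a)))
        = (sqrt (pi / B) * sqrt (pi / a)) * exp (E\<^sup>2 / (4 * B) + b\<^sup>2 / (4 * a))"
      by (simp add: K_def mult_exp_exp[symmetric] mult_ac)
    then show ?thesis
      by (simp only: sqrt_eq exponent_eq)
  qed
  finally show ?thesis .
qed

lemma integral_exp_quadratic_iexp:
  fixes B t :: real
  assumes B: "B > 0"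
  shows "(\<integral>y. complex_of_real (exp (-B*y\<^sup>2)) * iexp (t*y) \<partial>lborel) = complex_of_real (sqrt (pi/B) * exp (-t\<^sup>2/(4*B)))"
proof -
  define c where "c = sqrt (2*B)"
  have c: "c > 0" using B by (simp add: c_def)
  have c2: "c\<^sup>2 = 2*B" using B by (simp add: c_def)
  define I where "I = (\<integral>y. complex_of_real (exp (-B*y\<^sup>2)) * iexp (t*y) \<partial>lborel)"
  have "char std_normal_distribution (t/c) = complex_of_real (exp (- ((t/c)\<^sup>2) / 2))"
    by (simp add: char_std_normal_distribution)
  also have "char std_normal_distribution (t/c) = (\<integral>x. std_normal_density x *\<^sub>R iexp ((t/c)*x) \<partial>lborel)"
    unfolding char_def by (rule integral_density) auto
  also have "\<dots> = \<bar>c\<bar> *\<^sub>R (\<integral>y. std_normal_density (0 + c*y) *\<^sub>R iexp ((t/c)*(0 + c*y)) \<partial>lborel)"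
    using c by (intro lborel_integral_real_affine) simp
  also have "(\<lambda>y. std_normal_density (0 + c*y) *\<^sub>R iexp ((t/c)*(0 + c*y)))
      = (\<lambda>y. (1/sqrt (2*pi)) *\<^sub>R (complex_of_real (exp (-B*y\<^sup>2)) * iexp (t*y)))"
  proof
    fix y
    have "(c*y)\<^sup>2 / 2 = B*y\<^sup>2" using c2 by (simp add: power_mult_distrib)
    then show "std_normal_density (0 + c*y) *\<^sub>R iexp ((t/c)*(0 + c*y))
      = (1/sqrt (2*pi)) *\<^sub>R (complex_of_real (exp (-B*y\<^sup>2)) * iexp (t*y))"
      using c unfolding std_normal_density_def by (simp add: scaleR_conv_of_real)
  qed
  also have "(\<integral>y. (1/sqrt (2*pi)) *\<^sub>R (complex_of_real (exp (-B*y\<^sup>2)) * iexp (t*y)) \<partial>lborel)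
      = (1/sqrt (2*pi)) *\<^sub>R I"
    unfolding I_def by (rule integral_scaleR_right)
  finally have eq: "complex_of_real (exp (- ((t/c)\<^sup>2) / 2)) = complex_of_real (c / sqrt (2*pi)) * I"
    using c by (simp add: scaleR_conv_of_real)
  have "I = complex_of_real (sqrt (2*pi) / c * exp (- ((t/c)\<^sup>2) / 2))"
    using eq c by (simp add: field_simps)
  also have "sqrt (2*pi) / c = sqrt (pi/B)"
    unfolding c_def using B by (simp add: real_sqrt_divide[symmetric])
  also have "- ((t/c)\<^sup>2) / 2 = -t\<^sup>2/(4*B)"
    using c2 B by (simp add: power_divide)
  finally show ?thesis unfolding I_def .
qed

lemma integrable_exp_quadratic_iexp:
  fixes B t :: real
  assumes B: "B > 0"
  shows "integrable lborel (\<lambda>y. complex_of_real (exp (-B*y\<^sup>2)) * iexp (t*y))"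
proof (rule Bochner_Integration.integrable_bound[where f="\<lambda>y. exp (-B*y\<^sup>2 + 0*y)"])
  show "integrable lborel (\<lambda>y. exp (-B*y\<^sup>2 + 0*y))"
    using has_bochner_integral_exp_quadratic[OF B, of 0] unfolding has_bochner_integral_iff by blast
  show "AE y in lborel. norm (complex_of_real (exp (-B*y\<^sup>2)) * iexp (t*y)) \<le> norm (exp (-B*y\<^sup>2 + 0*y))"
    by (simp add: norm_mult)
qed measurable

section \<open>The maximum of a complex quadratic\<close>

text \<open>For \<open>|e| < 1\<close>, \<open>quad_max w e\<close> is the maximum of \<open>Re (w z) + Re (e z^2) - |z|^2\<close> over \<open>z\<close>,
  attained at the critical point \<open>z\<^sub>0 = (cnj w + cnj e w) / (2 (1 - |e|^2))\<close>.\<close>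

definition quad_max :: "complex \<Rightarrow> complex \<Rightarrow> real" where
  "quad_max w e = ((cmod w)\<^sup>2 + Re (e * (cnj w)\<^sup>2)) / (4 * (1 - (cmod e)\<^sup>2))"

lemma quad_exponent_shift:
  fixes w e z\<^sub>0 h :: complex
  assumes "w + 2 * e * z\<^sub>0 = 2 * cnj z\<^sub>0"
  shows "Re (w * (z\<^sub>0 + h)) + Re (e * (z\<^sub>0 + h)\<^sup>2) - (cmod (z\<^sub>0 + h))\<^sup>2
       = Re (w * z\<^sub>0) + Re (e * z\<^sub>0\<^sup>2) - (cmod z\<^sub>0)\<^sup>2 + Re (e * h\<^sup>2) - (cmod h)\<^sup>2"
proof -
  have "Re ((w + 2 * e * z\<^sub>0) * h) = 2 * (Re z\<^sub>0 * Re h + Im z\<^sub>0 * Im h)"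
    by (simp add: assms)
  then show ?thesis
    unfolding cmod_power2 by (simp add: power2_eq_square algebra_simps)
qed

lemma quad_max_critical_point:
  fixes w e :: complex
  assumes "cmod e < 1"
  defines "z\<^sub>0 \<equiv> (cnj w + cnj e * w) / (2 * (1 - (cmod e)\<^sup>2))"
  shows "w + 2 * e * z\<^sub>0 = 2 * cnj z\<^sub>0"
    and "Re (w * z\<^sub>0) + Re (e * z\<^sub>0\<^sup>2) - (cmod z\<^sub>0)\<^sup>2 = quad_max w e"
proof -
  define D where "D = 1 - (cmod e)\<^sup>2"
  have D: "D > 0"
    using assms(1) by (simp add: D_def abs_square_less_1)
  have eD: "e * cnj e = 1 - of_real D"
    using complex_norm_square[of e] by (simp add: D_def)
  have cnj_z0: "cnj z\<^sub>0 = (w + e * cnj w) / (2 * of_real D)"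
    by (simp add: z\<^sub>0_def D_def)
  have z0: "z\<^sub>0 = (cnj w + cnj e * w) / (2 * of_real D)"
    by (simp add: z\<^sub>0_def D_def)
  have "w + 2 * e * z\<^sub>0 = (w * of_real D + (e * cnj e) * w + e * cnj w) / of_real D"
    using D by (simp add: z0 field_simps)
  also have "\<dots> = 2 * cnj z\<^sub>0"
    using D by (simp add: eD cnj_z0 algebra_simps) (simp add: field_simps)
  finally show crit: "w + 2 * e * z\<^sub>0 = 2 * cnj z\<^sub>0" .
  have value_Re_square: "Re (e * z\<^sub>0\<^sup>2) = (cmod z\<^sub>0)\<^sup>2 - Re (w * z\<^sub>0) / 2"
  proof -
    have "z\<^sub>0 * cnj z\<^sub>0 = z\<^sub>0 * (2 * cnj z\<^sub>0) / 2"
      by simp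
    also have "\<dots> = w * z\<^sub>0 / 2 + e * z\<^sub>0\<^sup>2"
      by (simp only: crit[symmetric]) (simp add: power2_eq_square field_simps)
    finally have "e * z\<^sub>0\<^sup>2 = z\<^sub>0 * cnj z\<^sub>0 - w * z\<^sub>0 / 2"
      by simp
    then show ?thesis
      by (simp add: complex_norm_square[symmetric])
  qed
  have value_Re_linear: "Re (w * z\<^sub>0) = ((cmod w)\<^sup>2 + Re (e * (cnj w)\<^sup>2)) / (2 * D)"
  proof -
    have "w * z\<^sub>0 = (w * cnj w + cnj (e * (cnj w)\<^sup>2)) / (2 * of_real D)"
      by (simp add: z0 power2_eq_square field_simps)
    then show ?thesis
      by (simp add: complex_norm_square[symmetric] power2_eq_square flip: of_real_mult)
  qed
  have "Re (w * z\<^sub>0) + Re (e * z\<^sub>0\<^sup>2) - (cmod z\<^sub>0)\<^sup>2 = Re (w * z\<^sub>0) / 2"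
    unfolding value_Re_square by linarith
  also have "\<dots> = quad_max w e"
    unfolding value_Re_linear quad_max_def D_def by (simp add: divide_divide_eq_left)
  finally show "Re (w * z\<^sub>0) + Re (e * z\<^sub>0\<^sup>2) - (cmod z\<^sub>0)\<^sup>2 = quad_max w e" .
qed

lemma quad_max_ge:
  assumes "cmod e < 1"
  shows "Re (w * z) + Re (e * z\<^sup>2) - (cmod z)\<^sup>2 \<le> quad_max w e"
proof -
  define z\<^sub>0 where "z\<^sub>0 = (cnj w + cnj e * w) / (2 * (1 - (cmod e)\<^sup>2))"
  note crit = quad_max_critical_point[OF assms, of w, folded z\<^sub>0_def]
  have "Re (e * (z - z\<^sub>0)\<^sup>2) \<le> (cmod (z - z\<^sub>0))\<^sup>2"
  proof -
    have "Re (e * (z - z\<^sub>0)\<^sup>2) \<le> cmod e * (cmod (z - z\<^sub>0))\<^sup>2"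
      using complex_Re_le_cmod[of "e * (z - z\<^sub>0)\<^sup>2"] by (simp add: norm_mult norm_power)
    also have "\<dots> \<le> (cmod (z - z\<^sub>0))\<^sup>2"
      using assms by (simp add: mult_left_le_one_le)
    finally show ?thesis .
  qed
  moreover have "Re (w * z) + Re (e * z\<^sup>2) - (cmod z)\<^sup>2
      = quad_max w e + Re (e * (z - z\<^sub>0)\<^sup>2) - (cmod (z - z\<^sub>0))\<^sup>2"
    using quad_exponent_shift[OF crit(1), where h = "z - z\<^sub>0"] crit(2) by simp
  ultimately show ?thesis
    by linarith
qed

lemma quad_max_attained:
  assumes "cmod e < 1"
  obtains z where "Re (w * z) + Re (e * z\<^sup>2) - (cmod z)\<^sup>2 = quad_max w e"
  using quad_max_critical_point(2)[OF assms] by blast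

lemma quad_max_scale: "quad_max (of_real t * w) e = t\<^sup>2 * quad_max w e"
  unfolding quad_max_def by (simp add: norm_mult power_mult_distrib algebra_simps)

lemma cmod_midpoint_less_1: "cmod c < 1 \<Longrightarrow> cmod d < 1 \<Longrightarrow> cmod ((c + d) / 2) < 1"
  using norm_triangle_ineq[of c d] by simp

lemma quad_max_midpoint_le:
  assumes c: "cmod c < 1" and d: "cmod d < 1"
  shows "quad_max (a + b) ((c + d) / 2) \<le> 2 * quad_max a c + 2 * quad_max b d"
proof -
  obtain z where z: "Re ((a + b) * z) + Re ((c + d) / 2 * z\<^sup>2) - (cmod z)\<^sup>2 = quad_max (a + b) ((c + d) / 2)"
    using quad_max_attained[OF cmod_midpoint_less_1[OF c d]] by blast
  have "Re ((a + b) * z) + Re ((c + d) / 2 * z\<^sup>2) - (cmod z)\<^sup>2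
      = 2 * (Re (a * (z / 2)) + Re (c * (z / 2)\<^sup>2) - (cmod (z / 2))\<^sup>2)
      + 2 * (Re (b * (z / 2)) + Re (d * (z / 2)\<^sup>2) - (cmod (z / 2))\<^sup>2)"
    unfolding cmod_power2 by (simp add: power2_eq_square algebra_simps) (simp add: field_simps)
  also have "\<dots> \<le> 2 * quad_max a c + 2 * quad_max b d"
    by (intro add_mono mult_left_mono quad_max_ge c d) simp_all
  finally show ?thesis
    using z by simp
qed

section \<open>Gaussian integrals over the complex plane\<close>

lemma nn_integral_exp_quadratic_complex:
  fixes w e :: complex and l :: real
  assumes l: "l > 0" and e: "cmod e < 1"
  shows "(\<integral>\<^sup>+z. ennreal (exp (Re (w * z) + l * Re (e * z\<^sup>2) - l * (cmod z)\<^sup>2)) \<partial>lborel)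
       = ennreal (pi / (l * sqrt (1 - (cmod e)\<^sup>2)) * exp (quad_max w e / l))"
proof -
  define A where "A = l * (1 - Re e)"
  define B where "B = l * (1 + Re e)"
  define C where "C = l * Im e"
  have D: "1 - (cmod e)\<^sup>2 > 0"
    using e by (simp add: abs_square_less_1)
  have B: "B > 0"
    using l e abs_Re_le_cmod[of e] by (simp add: B_def)
  have det: "A * B - C\<^sup>2 = l\<^sup>2 * (1 - (cmod e)\<^sup>2)"
    unfolding cmod_power2 A_def B_def C_def by (simp add: power2_eq_square algebra_simps)
  then have det_pos: "A * B - C\<^sup>2 > 0"
    using l D by simp
  have exponent: "Re (w * Complex x y) + l * Re (e * (Complex x y)\<^sup>2) - l * (cmod (Complex x y))\<^sup>2
      = - (A * x\<^sup>2 + 2 * C * x * y + B * y\<^sup>2) + Re w * x + (- Im w) * y" for x y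
    unfolding cmod_power2 by (simp add: A_def B_def C_def power2_eq_square algebra_simps)
  have "(\<integral>\<^sup>+z. ennreal (exp (Re (w * z) + l * Re (e * z\<^sup>2) - l * (cmod z)\<^sup>2)) \<partial>lborel)
      = (\<integral>\<^sup>+x. \<integral>\<^sup>+y. ennreal (exp (- (A * x\<^sup>2 + 2 * C * x * y + B * y\<^sup>2) + Re w * x + (- Im w) * y))
           \<partial>lborel \<partial>lborel)"
    unfolding exponent[symmetric] by (rule nn_integral_lborel_complex) measurable
  also have "\<dots> = ennreal (pi / sqrt (A * B - C\<^sup>2)
      * exp ((B * (Re w)\<^sup>2 - 2 * C * Re w * (- Im w) + A * (- Im w)\<^sup>2) / (4 * (A * B - C\<^sup>2))))"
    by (rule nn_integral_exp_quadratic_form[OF B det_pos])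
  also have "sqrt (A * B - C\<^sup>2) = l * sqrt (1 - (cmod e)\<^sup>2)"
    using l by (simp add: det real_sqrt_mult)
  also have "(B * (Re w)\<^sup>2 - 2 * C * Re w * (- Im w) + A * (- Im w)\<^sup>2) / (4 * (A * B - C\<^sup>2)) = quad_max w e / l"
  proof -
    have numerator: "B * (Re w)\<^sup>2 - 2 * C * Re w * (- Im w) + A * (- Im w)\<^sup>2
        = l * ((cmod w)\<^sup>2 + Re (e * (cnj w)\<^sup>2))"
      unfolding cmod_power2 by (simp add: A_def B_def C_def power2_eq_square algebra_simps)
    show ?thesis
      unfolding numerator det quad_max_def using l D by (simp add: field_simps power2_eq_square)
  qed
  finally show ?thesis .
qed

lemma integral_exp_quadratic_complex:
  fixes w e :: complex and l :: real
  assumes l: "l > 0" and e: "cmod e < 1"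
  shows "(\<integral>z. exp (Re (w*z) + l * Re (e*z\<^sup>2) - l*(cmod z)\<^sup>2) \<partial>lborel)
       = pi / (l * sqrt (1 - (cmod e)\<^sup>2)) * exp (quad_max w e / l)"
proof -
  have "(cmod e)\<^sup>2 < 1"
    using e by (simp add: abs_square_less_1)
  then have nonneg: "0 \<le> pi / (l * sqrt (1 - (cmod e)\<^sup>2)) * exp (quad_max w e / l)"
    using l by simp
  have "(\<integral>z. exp (Re (w*z) + l * Re (e*z\<^sup>2) - l*(cmod z)\<^sup>2) \<partial>lborel)
      = enn2real (\<integral>\<^sup>+z. ennreal (exp (Re (w*z) + l * Re (e*z\<^sup>2) - l*(cmod z)\<^sup>2)) \<partial>lborel)"
    by (rule integral_eq_nn_integral) auto
  also have "\<dots> = pi / (l * sqrt (1 - (cmod e)\<^sup>2)) * exp (quad_max w e / l)"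
    unfolding nn_integral_exp_quadratic_complex[OF l e] using nonneg by simp
  finally show ?thesis .
qed

lemma integral_exp_quadratic_iexp_complex:
  fixes A B k :: real
  assumes A: "A > 0" and B: "B > 0"
  shows "(\<integral>z. complex_of_real (exp (- A * (Re z)\<^sup>2 - B * (Im z)\<^sup>2)) * iexp (k * Re z * Im z) \<partial>lborel)
       = complex_of_real (pi / sqrt (A * B + k\<^sup>2 / 4))"
proof -
  define G where "G = (\<lambda>x y. complex_of_real (exp (- A * x\<^sup>2)) * (complex_of_real (exp (- B * y\<^sup>2)) * iexp ((k * x) * y)))"
  define F where "F = (\<lambda>z. complex_of_real (exp (- A * (Re z)\<^sup>2 - B * (Im z)\<^sup>2)) * iexp (k * Re z * Im z))"
  define A' where "A' = A + k\<^sup>2 / (4 * B)"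
  have A': "A' > 0"
    using A B by (simp add: A'_def add_pos_nonneg)
  have F_Complex: "F (Complex x y) = G x y" for x y
    by (simp add: F_def G_def exp_diff exp_minus field_simps)
  have integral_G: "(\<integral>y. G x y \<partial>lborel) = complex_of_real (sqrt (pi / B) * exp (- A' * x\<^sup>2 + 0 * x))" for x
  proof -
    have "(\<integral>y. G x y \<partial>lborel) = complex_of_real (exp (- A * x\<^sup>2))
        * (\<integral>y. complex_of_real (exp (- B * y\<^sup>2)) * iexp ((k * x) * y) \<partial>lborel)"
      unfolding G_def by (rule integral_mult_right_zero)
    also have "\<dots> = complex_of_real (sqrt (pi / B) * (exp (- A * x\<^sup>2) * exp (- (k * x)\<^sup>2 / (4 * B))))"
      by (simp only: integral_exp_quadratic_iexp[OF B]) (simp add: mult_ac)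
    also have "exp (- A * x\<^sup>2) * exp (- (k * x)\<^sup>2 / (4 * B)) = exp (- A' * x\<^sup>2 + 0 * x)"
      unfolding mult_exp_exp A'_def using B by (simp add: field_simps power_mult_distrib)
    finally show ?thesis .
  qed
  have integral_norm_G: "(\<integral>y. norm (G x y) \<partial>lborel) = exp (- A * x\<^sup>2) * sqrt (pi / B)" for x
  proof -
    have "(\<integral>y. norm (G x y) \<partial>lborel) = (\<integral>y. exp (- A * x\<^sup>2) * exp (- B * y\<^sup>2 + 0 * y) \<partial>lborel)"
      unfolding G_def norm_mult norm_of_real norm_exp_i_times by simp
    then show ?thesis
      using has_bochner_integral_exp_quadratic[OF B, of 0] by (simp add: has_bochner_integral_iff)
  qed
  have "integrable (lborel \<Otimes>\<^sub>M lborel) (\<lambda>p. G (fst p) (snd p))"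
  proof (rule lborel_pair.Fubini_integrable)
    show "(\<lambda>p. G (fst p) (snd p)) \<in> borel_measurable (lborel \<Otimes>\<^sub>M lborel)"
      unfolding G_def by measurable
    have "integrable lborel (\<lambda>x. exp (- A * x\<^sup>2 + 0 * x) * sqrt (pi / B))"
      using has_bochner_integral_exp_quadratic[OF A, of 0] by (simp add: has_bochner_integral_iff)
    then show "integrable lborel (\<lambda>x. \<integral>y. norm (G (fst (x, y)) (snd (x, y))) \<partial>lborel)"
      by (simp add: integral_norm_G)
    show "AE x in lborel. integrable lborel (\<lambda>y. G (fst (x, y)) (snd (x, y)))"
      unfolding G_def fst_conv snd_conv
      by (intro AE_I2 integrable_mult_right integrable_exp_quadratic_iexp[OF B])
  qed
  have "(\<integral>z. F z \<partial>lborel) = (\<integral>x. (\<integral>y. F (Complex x y) \<partial>lborel) \<partial>lborel)"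
  proof (rule integral_lborel_complex)
    show "F \<in> borel_measurable borel"
      unfolding F_def by measurable
    show "integrable (lborel \<Otimes>\<^sub>M lborel) (\<lambda>p. F (Complex (fst p) (snd p)))"
      using \<open>integrable (lborel \<Otimes>\<^sub>M lborel) (\<lambda>p. G (fst p) (snd p))\<close> by (simp add: F_Complex)
  qed
  also have "\<dots> = (\<integral>x. complex_of_real (sqrt (pi / B) * exp (- A' * x\<^sup>2 + 0 * x)) \<partial>lborel)"
    by (simp only: F_Complex integral_G)
  also have "\<dots> = complex_of_real (sqrt (pi / B) * sqrt (pi / A'))"
    using has_bochner_integral_exp_quadratic[OF A', of 0]
    by (simp add: has_bochner_integral_iff integral_mult_right_zero)
  also have "sqrt (pi / B) * sqrt (pi / A') = pi / sqrt (A * B + k\<^sup>2 / 4)"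
  proof -
    have "B * A' = A * B + k\<^sup>2 / 4"
      using B by (simp add: A'_def field_simps)
    then show ?thesis
      using A' B by (simp add: real_sqrt_mult[symmetric] real_sqrt_divide power2_eq_square mult.commute)
  qed
  finally show ?thesis
    unfolding F_def .
qed

section \<open>The weighted AM-GM bound defining \<open>C\<^sub>p\<close>\<close>

lemma conj_exp_gt_1: "p > 1 \<Longrightarrow> conj_exp p > 1"
  unfolding conj_exp_def by (simp add: field_simps)

lemma inverse_add_inverse_conj_exp: "p > 1 \<Longrightarrow> 1 / p + 1 / conj_exp p = 1"
  unfolding conj_exp_def by (simp add: field_simps)

lemma Cp_pos: "p > 1 \<Longrightarrow> Cp p > 0"
  unfolding Cp_def using conj_exp_gt_1[of p] by simp

lemma powr_mult_powr_conj_exp_le_Cp: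
  fixes p X Y :: real
  assumes p: "p > 1" and X: "X > 0" and Y: "Y > 0"
  shows "X powr (1 / p) * Y powr (1 / conj_exp p) \<le> Cp p * ((X + Y) / 2)"
proof -
  define q where "q = conj_exp p"
  have q: "q > 1" and pq: "1 / p + 1 / q = 1"
    using conj_exp_gt_1[OF p] inverse_add_inverse_conj_exp[OF p] by (simp_all add: q_def)
  define k where "k = (p / 2) powr (1 / p) * (q / 2) powr (1 / q)"
  have k: "k > 0"
    using p q by (simp add: k_def)
  have "k * (X powr (1 / p) * Y powr (1 / q)) = (p * X / 2) powr (1 / p) * (q * Y / 2) powr (1 / q)"
    unfolding k_def using p q X Y by (simp add: powr_mult[symmetric] mult_ac)
  also have "\<dots> \<le> (1 / p) * (p * X / 2) + (1 / q) * (q * Y / 2)"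
    by (rule Youngs_inequality_0) (use p q X Y pq in auto)
  also have "\<dots> = (X + Y) / 2"
    using p q by simp
  finally have young: "k * (X powr (1 / p) * Y powr (1 / q)) \<le> (X + Y) / 2" .
  have "k * Cp p = (p powr (1 / p) * p powr (- 1 / p)) * (q powr (1 / q) * q powr (- 1 / q))
                   * (2 / (2 powr (1 / p) * 2 powr (1 / q)))"
    unfolding k_def Cp_def q_def[symmetric] using p q by (simp add: powr_divide field_simps)
  also have "\<dots> = 1"
    using p q by (simp add: powr_add[symmetric] pq)
  finally have "Cp p = 1 / k"
    using k by (simp add: field_simps)
  then show ?thesis
    using young k unfolding q_def by (simp add: pos_le_divide_eq mult.commute)
qed

lemma inverse_sqrt_le_Cp:
  fixes p X Y E :: real
  assumes p: "p > 1" and X: "X > 0" and Y: "Y > 0" and E: "(X + Y) / 2 \<le> E"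
  shows "1 / sqrt E \<le> sqrt (Cp p) * (X powr (- 1 / (2 * p)) * Y powr (- 1 / (2 * conj_exp p)))"
proof -
  define q where "q = conj_exp p"
  have "X powr (1 / p) * Y powr (1 / q) \<le> Cp p * E"
    using powr_mult_powr_conj_exp_le_Cp[OF p X Y] E Cp_pos[OF p] unfolding q_def
    by (meson mult_left_mono order_trans less_imp_le)
  then have "sqrt (X powr (1 / p) * Y powr (1 / q)) \<le> sqrt (Cp p) * sqrt E"
    by (metis real_sqrt_le_mono real_sqrt_mult)
  moreover have "sqrt (X powr (1 / p) * Y powr (1 / q)) = X powr (1 / (2 * p)) * Y powr (1 / (2 * q))"
    using X Y by (simp add: real_sqrt_mult powr_half_sqrt[symmetric] powr_powr mult.commute)
  ultimately have "X powr (1 / (2 * p)) * Y powr (1 / (2 * q)) \<le> sqrt (Cp p) * sqrt E"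
    by simp
  moreover have "sqrt E > 0"
    using X Y E by simp
  ultimately have "1 / sqrt E \<le> sqrt (Cp p) / (X powr (1 / (2 * p)) * Y powr (1 / (2 * q)))"
    using X Y by (simp add: field_simps)
  also have "\<dots> = sqrt (Cp p) * (X powr (- 1 / (2 * p)) * Y powr (- 1 / (2 * q)))"
    by (simp add: powr_minus_divide)
  finally show ?thesis
    unfolding q_def .
qed

section \<open>The upper bound\<close>

definition gauss_exp :: "real \<Rightarrow> complex \<Rightarrow> complex \<Rightarrow> complex \<Rightarrow> complex" where
  "gauss_exp \<alpha> a c = (\<lambda>z. exp (complex_of_real \<alpha> * a * z + complex_of_real (\<alpha> / 2) * c * z\<^sup>2))"

lemma gaussians_eq: "gaussians \<alpha> = {gauss_exp \<alpha> a c | a c. cmod c < 1}"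
  unfolding gaussians_def gauss_exp_def ..

lemma norm_gauss_exp: "cmod (gauss_exp \<alpha> a c z) = exp (\<alpha> * Re (a * z) + \<alpha> / 2 * Re (c * z\<^sup>2))"
  unfolding gauss_exp_def by (simp add: field_simps)

lemma gnorm_gauss_exp:
  fixes \<alpha> q :: real and a c :: complex
  assumes \<alpha>: "\<alpha> > 0" and q: "q > 0" and c: "cmod c < 1"
  shows "gnorm q \<alpha> (gauss_exp \<alpha> a c) = exp (2 * \<alpha> * quad_max a c) * (1 - (cmod c)\<^sup>2) powr (- 1 / (2 * q))"
proof -
  define l where "l = \<alpha> * q / 2"
  define Y where "Y = 1 - (cmod c)\<^sup>2"
  have l: "l > 0"
    using \<alpha> q by (simp add: l_def)
  have Y: "Y > 0"
    using c by (simp add: Y_def abs_square_less_1)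
  have "(\<integral>z. (cmod (gauss_exp \<alpha> a c z)) powr q * gauss_dens l z \<partial>lborel)
      = (\<integral>z. l / pi * exp (Re (complex_of_real (q * \<alpha>) * a * z) + l * Re (c * z\<^sup>2) - l * (cmod z)\<^sup>2) \<partial>lborel)"
    unfolding norm_gauss_exp exp_powr_real gauss_dens_def l_def
    by (rule Bochner_Integration.integral_cong) (simp_all add: mult_exp_exp field_simps)
  also have "\<dots> = exp (2 * q * \<alpha> * quad_max a c) / sqrt Y"
    using l \<alpha> q Y unfolding integral_mult_right_zero integral_exp_quadratic_complex[OF l c] quad_max_scale
    by (simp add: Y_def l_def power2_eq_square)
  finally have "gnorm q \<alpha> (gauss_exp \<alpha> a c) = (exp (2 * q * \<alpha> * quad_max a c) / sqrt Y) powr (1 / q)"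
    by (simp add: gnorm_def l_def)
  also have "\<dots> = exp (2 * q * \<alpha> * quad_max a c) powr (1 / q) / (Y powr (1 / 2)) powr (1 / q)"
    using Y by (simp add: powr_divide powr_half_sqrt)
  also have "\<dots> = exp (2 * \<alpha> * quad_max a c) / Y powr (1 / (2 * q))"
    using q by (simp add: exp_powr_real powr_powr)
  also have "\<dots> = exp (2 * \<alpha> * quad_max a c) * Y powr (- 1 / (2 * q))"
    by (simp add: powr_minus_divide)
  finally show ?thesis
    unfolding Y_def .
qed

lemma norm_ginner_gauss_exp_le:
  fixes \<alpha> :: real and a b c d :: complex
  assumes \<alpha>: "\<alpha> > 0" and c: "cmod c < 1" and d: "cmod d < 1"
  shows "cmod (ginner \<alpha> (gauss_exp \<alpha> a c) (gauss_exp \<alpha> b d))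
       \<le> exp (\<alpha> * quad_max (a + b) ((c + d) / 2)) / sqrt (1 - (cmod ((c + d) / 2))\<^sup>2)"
proof -
  have e: "cmod ((c + d) / 2) < 1"
    using c d by (rule cmod_midpoint_less_1)
  have "cmod (ginner \<alpha> (gauss_exp \<alpha> a c) (gauss_exp \<alpha> b d))
      \<le> (\<integral>z. cmod (gauss_dens \<alpha> z * (gauss_exp \<alpha> a c z * cnj (gauss_exp \<alpha> b d z))) \<partial>lborel)"
    unfolding ginner_def by (rule integral_norm_bound)
  also have "\<dots> = (\<integral>z. \<alpha> / pi * exp (Re (complex_of_real \<alpha> * (a + b) * z)
                      + \<alpha> * Re ((c + d) / 2 * z\<^sup>2) - \<alpha> * (cmod z)\<^sup>2) \<partial>lborel)"
  proof (rule Bochner_Integration.integral_cong)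
    fix z
    have "cmod (gauss_dens \<alpha> z * (gauss_exp \<alpha> a c z * cnj (gauss_exp \<alpha> b d z)))
        = \<alpha> / pi * (exp (- \<alpha> * (cmod z)\<^sup>2) * exp (\<alpha> * Re (a * z) + \<alpha> / 2 * Re (c * z\<^sup>2))
                     * exp (\<alpha> * Re (b * z) + \<alpha> / 2 * Re (d * z\<^sup>2)))"
      unfolding norm_mult norm_of_real complex_mod_cnj norm_gauss_exp
      using \<alpha> by (simp add: gauss_dens_def)
    also have "\<dots> = \<alpha> / pi * exp (Re (complex_of_real \<alpha> * (a + b) * z)
                      + \<alpha> * Re ((c + d) / 2 * z\<^sup>2) - \<alpha> * (cmod z)\<^sup>2)"
      by (simp add: mult_exp_exp algebra_simps) (simp add: field_simps)
    finally show "cmod (gauss_dens \<alpha> z * (gauss_exp \<alpha> a c z * cnj (gauss_exp \<alpha> b d z)))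
        = \<alpha> / pi * exp (Re (complex_of_real \<alpha> * (a + b) * z)
                      + \<alpha> * Re ((c + d) / 2 * z\<^sup>2) - \<alpha> * (cmod z)\<^sup>2)" .
  qed simp
  also have "\<dots> = exp (\<alpha> * quad_max (a + b) ((c + d) / 2)) / sqrt (1 - (cmod ((c + d) / 2))\<^sup>2)"
    using \<alpha> e unfolding integral_mult_right_zero integral_exp_quadratic_complex[OF \<alpha> e] quad_max_scale
    by (simp add: quad_max_scale power2_eq_square abs_square_less_1)
  finally show ?thesis .
qed

lemma one_minus_norm_midpoint_sq_ge:
  "((1 - (cmod c)\<^sup>2) + (1 - (cmod d)\<^sup>2)) / 2 \<le> 1 - (cmod ((c + d) / 2))\<^sup>2"
proof -
  have "(1 - (cmod ((c + d) / 2))\<^sup>2) - ((1 - (cmod c)\<^sup>2) + (1 - (cmod d)\<^sup>2)) / 2 = (cmod ((c - d) / 2))\<^sup>2"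
    unfolding cmod_power2 by (simp add: power2_eq_square field_simps)
  then show ?thesis
    by (metis diff_ge_0_iff_ge zero_le_power2)
qed

lemma Rratio_gauss_exp_le:
  fixes \<alpha> p :: real and a b c d :: complex
  assumes \<alpha>: "\<alpha> > 0" and p: "p > 1" and c: "cmod c < 1" and d: "cmod d < 1"
  shows "Rratio p \<alpha> (gauss_exp \<alpha> a c) (gauss_exp \<alpha> b d) \<le> sqrt (Cp p)"
proof -
  define q where "q = conj_exp p"
  define X where "X = 1 - (cmod c)\<^sup>2"
  define Y where "Y = 1 - (cmod d)\<^sup>2"
  have q: "q > 1"
    using conj_exp_gt_1[OF p] by (simp add: q_def)
  have X: "X > 0" and Y: "Y > 0"
    using c d by (simp_all add: X_def Y_def abs_square_less_1)
  have norm_g: "gnorm p \<alpha> (gauss_exp \<alpha> a c) = exp (2 * \<alpha> * quad_max a c) * X powr (- 1 / (2 * p))"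
    using gnorm_gauss_exp[OF \<alpha> _ c] p unfolding X_def by simp
  have norm_h: "gnorm q \<alpha> (gauss_exp \<alpha> b d) = exp (2 * \<alpha> * quad_max b d) * Y powr (- 1 / (2 * q))"
    using gnorm_gauss_exp[OF \<alpha> _ d] q unfolding Y_def by simp
  have exp_le: "exp (\<alpha> * quad_max (a + b) ((c + d) / 2)) \<le> exp (2 * \<alpha> * quad_max a c) * exp (2 * \<alpha> * quad_max b d)"
    using mult_left_mono[OF quad_max_midpoint_le[OF c d, of a b], of \<alpha>] \<alpha>
    by (simp add: mult_exp_exp algebra_simps)
  have sqrt_le: "1 / sqrt (1 - (cmod ((c + d) / 2))\<^sup>2)
      \<le> sqrt (Cp p) * (X powr (- 1 / (2 * p)) * Y powr (- 1 / (2 * q)))"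
    unfolding q_def X_def Y_def
    by (rule inverse_sqrt_le_Cp[OF p X[unfolded X_def] Y[unfolded Y_def] one_minus_norm_midpoint_sq_ge])
  have "cmod (ginner \<alpha> (gauss_exp \<alpha> a c) (gauss_exp \<alpha> b d))
      \<le> exp (\<alpha> * quad_max (a + b) ((c + d) / 2)) * (1 / sqrt (1 - (cmod ((c + d) / 2))\<^sup>2))"
    using norm_ginner_gauss_exp_le[OF \<alpha> c d, of a b] by simp
  also have "\<dots> \<le> (exp (2 * \<alpha> * quad_max a c) * exp (2 * \<alpha> * quad_max b d))
                  * (sqrt (Cp p) * (X powr (- 1 / (2 * p)) * Y powr (- 1 / (2 * q))))"
    using cmod_midpoint_less_1[OF c d]
    by (intro mult_mono[OF exp_le sqrt_le]) (simp_all add: abs_square_le_1 less_imp_le)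
  also have "\<dots> = sqrt (Cp p) * (gnorm p \<alpha> (gauss_exp \<alpha> a c) * gnorm q \<alpha> (gauss_exp \<alpha> b d))"
    unfolding norm_g norm_h by (simp only: mult_ac)
  finally show ?thesis
    using X Y unfolding Rratio_def q_def[symmetric] norm_g norm_h by (simp add: divide_le_eq)
qed

section \<open>Sharpness\<close>

lemma ginner_gauss_exp_real:
  fixes \<alpha> u v :: real
  assumes \<alpha>: "\<alpha> > 0" and u: "\<bar>u\<bar> < 1" and v: "\<bar>v\<bar> < 1"
  shows "ginner \<alpha> (gauss_exp \<alpha> 0 u) (gauss_exp \<alpha> 0 v) = complex_of_real (1 / sqrt (1 - u * v))"
proof -
  define A where "A = \<alpha> * (1 - (u + v) / 2)"
  define B where "B = \<alpha> * (1 + (u + v) / 2)"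
  define k where "k = \<alpha> * (u - v)"
  have A: "A > 0" and B: "B > 0"
  proof -
    have "0 < 1 - (u + v) / 2"
      using u v by (simp add: abs_less_iff field_simps)
    moreover have "0 < 1 + (u + v) / 2"
      using u v by (simp add: abs_less_iff field_simps)
    ultimately show "A > 0" and "B > 0"
      using \<alpha> by (simp_all add: A_def B_def)
  qed
  have integrand: "complex_of_real (gauss_dens \<alpha> z) * (gauss_exp \<alpha> 0 u z * cnj (gauss_exp \<alpha> 0 v z))
      = complex_of_real (\<alpha> / pi)
        * (complex_of_real (exp (- A * (Re z)\<^sup>2 - B * (Im z)\<^sup>2)) * iexp (k * Re z * Im z))" for z
  proof -
    have "- \<alpha> * (cmod z)\<^sup>2 + (\<alpha> / 2 * u * z\<^sup>2 + cnj (\<alpha> / 2 * v * z\<^sup>2))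
        = (- A * (Re z)\<^sup>2 - B * (Im z)\<^sup>2) + \<i> * (k * Re z * Im z)"
      unfolding cmod_power2 by (simp add: complex_eq_iff power2_eq_square A_def B_def k_def field_simps)
    then show ?thesis
      unfolding gauss_dens_def gauss_exp_def exp_cnj
      by (simp add: mult_exp_exp exp_of_real[symmetric] flip: exp_add)
  qed
  have "ginner \<alpha> (gauss_exp \<alpha> 0 u) (gauss_exp \<alpha> 0 v)
      = complex_of_real (\<alpha> / pi)
        * (\<integral>z. complex_of_real (exp (- A * (Re z)\<^sup>2 - B * (Im z)\<^sup>2)) * iexp (k * Re z * Im z) \<partial>lborel)"
    unfolding ginner_def integrand by (rule integral_mult_right_zero)
  also have "\<dots> = complex_of_real (\<alpha> / pi) * complex_of_real (pi / sqrt (A * B + k\<^sup>2 / 4))"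
    by (simp only: integral_exp_quadratic_iexp_complex[OF A B])
  also have "A * B + k\<^sup>2 / 4 = \<alpha>\<^sup>2 * (1 - u * v)"
    by (simp add: A_def B_def k_def power2_eq_square field_simps)
  finally show ?thesis
    using \<alpha> by (simp add: real_sqrt_mult)
qed

lemma Rratio_gauss_exp_real:
  fixes \<alpha> p u v :: real
  assumes \<alpha>: "\<alpha> > 0" and p: "p > 1" and u: "\<bar>u\<bar> < 1" and v: "\<bar>v\<bar> < 1"
  shows "Rratio p \<alpha> (gauss_exp \<alpha> 0 u) (gauss_exp \<alpha> 0 v)
       = (1 - u\<^sup>2) powr (1 / (2 * p)) * (1 - v\<^sup>2) powr (1 / (2 * conj_exp p)) / sqrt (1 - u * v)"
proof -
  define q where "q = conj_exp p"
  have q: "q > 1"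
    using conj_exp_gt_1[OF p] by (simp add: q_def)
  have U: "1 - u\<^sup>2 > 0" and V: "1 - v\<^sup>2 > 0"
    using u v by (simp_all add: abs_square_less_1)
  have "\<bar>u * v\<bar> < 1"
    using abs_mult_less[OF u v] by (simp add: abs_mult)
  then have W: "1 - u * v > 0"
    by simp
  have "gnorm p \<alpha> (gauss_exp \<alpha> 0 u) = (1 - u\<^sup>2) powr (- 1 / (2 * p))"
    using gnorm_gauss_exp[of \<alpha> p "of_real u" 0] \<alpha> p u by (simp add: quad_max_def)
  moreover have "gnorm q \<alpha> (gauss_exp \<alpha> 0 v) = (1 - v\<^sup>2) powr (- 1 / (2 * q))"
    using gnorm_gauss_exp[of \<alpha> q "of_real v" 0] \<alpha> q v by (simp add: quad_max_def)
  moreover have "cmod (ginner \<alpha> (gauss_exp \<alpha> 0 u) (gauss_exp \<alpha> 0 v)) = 1 / sqrt (1 - u * v)"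
    unfolding ginner_gauss_exp_real[OF \<alpha> u v] norm_of_real using W by simp
  ultimately show ?thesis
    using U V unfolding Rratio_def q_def[symmetric]
    by (simp add: powr_minus_divide)
qed

definition family_ratio :: "real \<Rightarrow> real \<Rightarrow> real" where
  "family_ratio p t = (1 / p * (2 - t / p)) powr (1 / (2 * p))
     * (1 / conj_exp p * (2 - t / conj_exp p)) powr (1 / (2 * conj_exp p)) / sqrt (1 - t / (p * conj_exp p))"

lemma Rratio_gauss_exp_eq_family_ratio:
  fixes \<alpha> p t :: real
  assumes \<alpha>: "\<alpha> > 0" and p: "p > 1" and t: "0 < t" "t \<le> 1"
  shows "Rratio p \<alpha> (gauss_exp \<alpha> 0 (of_real (1 - t / p))) (gauss_exp \<alpha> 0 (of_real (1 - t / conj_exp p)))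
       = family_ratio p t"
proof -
  define q where "q = conj_exp p"
  have q: "q > 1" and pq: "1 / p + 1 / q = 1"
    using conj_exp_gt_1[OF p] inverse_add_inverse_conj_exp[OF p] by (simp_all add: q_def)
  define P where "P = 1 / p * (2 - t / p)"
  define Q where "Q = 1 / q * (2 - t / q)"
  define W where "W = 1 - t / (p * q)"
  have tp: "0 < t / p" "t / p < 1" and tq: "0 < t / q" "t / q < 1"
    using p q t by simp_all
  have P: "P > 0"
    using p tp(2) unfolding P_def by (intro mult_pos_pos) (simp, linarith)
  have Q: "Q > 0"
    using q tq(2) unfolding Q_def by (intro mult_pos_pos) (simp, linarith)
  have "t / (p * q) < 1"
    using mult_strict_mono[OF tp(2), of "1 / q" 1] tp q by simp
  then have W: "W > 0"
    by (simp add: W_def)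
  have e1: "1 - (1 - t / p)\<^sup>2 = t * P" and e2: "1 - (1 - t / q)\<^sup>2 = t * Q"
    using p q by (simp_all add: P_def Q_def power2_eq_square field_simps)
  have e3: "1 - (1 - t / p) * (1 - t / q) = t * W"
  proof -
    have "1 - (1 - t / p) * (1 - t / q) = t * (1 / p + 1 / q) - t\<^sup>2 / (p * q)"
      using p q by (simp add: power2_eq_square field_simps)
    then show ?thesis
      unfolding pq W_def by (simp add: power2_eq_square field_simps)
  qed
  have sqrt_t: "t powr (1 / (2 * p)) * t powr (1 / (2 * q)) = sqrt t"
  proof -
    have exponents: "1 / (2 * p) + 1 / (2 * q) = 1 / 2"
      using pq by (simp add: field_simps)
    show ?thesis
      using t unfolding powr_add[symmetric] exponents by (simp add: powr_half_sqrt)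
  qed
  have "(1 - (1 - t / p)\<^sup>2) powr (1 / (2 * p)) * (1 - (1 - t / q)\<^sup>2) powr (1 / (2 * q))
      / sqrt (1 - (1 - t / p) * (1 - t / q))
      = (t powr (1 / (2 * p)) * t powr (1 / (2 * q))) * (P powr (1 / (2 * p)) * Q powr (1 / (2 * q)))
        / (sqrt t * sqrt W)"
    unfolding e1 e2 e3 using t P Q W by (simp add: powr_mult real_sqrt_mult mult_ac)
  also have "\<dots> = P powr (1 / (2 * p)) * Q powr (1 / (2 * q)) / sqrt W"
    unfolding sqrt_t using t by simp
  finally have "(1 - (1 - t / p)\<^sup>2) powr (1 / (2 * p)) * (1 - (1 - t / q)\<^sup>2) powr (1 / (2 * q))
      / sqrt (1 - (1 - t / p) * (1 - t / q)) = P powr (1 / (2 * p)) * Q powr (1 / (2 * q)) / sqrt W" .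
  moreover have "\<bar>1 - t / p\<bar> < 1" and "\<bar>1 - t / q\<bar> < 1"
    using tp tq by simp_all
  ultimately show ?thesis
    using Rratio_gauss_exp_real[OF \<alpha> p, of "1 - t / p" "1 - t / q"]
    unfolding family_ratio_def q_def[symmetric] P_def Q_def W_def by simp
qed

lemma family_ratio_0:
  assumes p: "p > 1"
  shows "family_ratio p 0 = sqrt (Cp p)"
proof -
  define q where "q = conj_exp p"
  have q: "q > 1" and pq: "1 / p + 1 / q = 1"
    using conj_exp_gt_1[OF p] inverse_add_inverse_conj_exp[OF p] by (simp_all add: q_def)
  have half_powr: "x powr (1 / (2 * r)) = sqrt (x powr (1 / r))" if "x > 0" for x r :: real
    using that by (simp add: powr_half_sqrt[symmetric] powr_powr mult.commute)
  have "family_ratio p 0 = sqrt ((2 / p) powr (1 / p)) * sqrt ((2 / q) powr (1 / q))"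
    using p q by (simp add: family_ratio_def q_def[symmetric] half_powr)
  also have "\<dots> = sqrt (2 powr (1 / p + 1 / q) / (p powr (1 / p) * q powr (1 / q)))"
    using p q by (simp add: real_sqrt_mult powr_divide powr_add real_sqrt_divide)
  also have "\<dots> = sqrt (Cp p)"
    unfolding pq Cp_def q_def[symmetric] by (simp add: powr_minus_divide)
  finally show ?thesis .
qed

lemma Rratio_gauss_exp_tendsto_sqrt_Cp:
  fixes \<alpha> p :: real
  assumes \<alpha>: "\<alpha> > 0" and p: "p > 1"
  shows "((\<lambda>t. Rratio p \<alpha> (gauss_exp \<alpha> 0 (of_real (1 - t / p))) (gauss_exp \<alpha> 0 (of_real (1 - t / conj_exp p))))
           \<longlongrightarrow> sqrt (Cp p)) (at_right 0)"
proof (rule Lim_transform_eventually)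
  have "isCont (family_ratio p) 0"
    using p conj_exp_gt_1[OF p] unfolding family_ratio_def by (intro continuous_intros) auto
  then show "(family_ratio p \<longlongrightarrow> sqrt (Cp p)) (at_right 0)"
    unfolding family_ratio_0[OF p, symmetric] isCont_def by (rule filterlim_mono) (simp_all add: at_le)
  show "\<forall>\<^sub>F t in at_right 0. family_ratio p t
      = Rratio p \<alpha> (gauss_exp \<alpha> 0 (of_real (1 - t / p))) (gauss_exp \<alpha> 0 (of_real (1 - t / conj_exp p)))"
    using eventually_at_right_real[OF zero_less_one]
    by eventually_elim (use Rratio_gauss_exp_eq_family_ratio[OF \<alpha> p] in force)
qed

lemma gauss_exp_real_pair_in_gaussians:
  fixes p t :: real
  assumes "p > 1" and "0 < t" "t < 1"
  shows "(gauss_exp \<alpha> 0 (of_real (1 - t / p)), gauss_exp \<alpha> 0 (of_real (1 - t / conj_exp p)))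
       \<in> gaussians \<alpha> \<times> gaussians \<alpha>"
proof -
  have "cmod (of_real (1 - t / r)) < 1" if "r > 1" for r
    using assms(2,3) that unfolding norm_of_real by (simp add: abs_less_iff)
  then show ?thesis
    unfolding gaussians_eq using assms(1) conj_exp_gt_1 by blast
qed

theorem theorem5p2:
  fixes \<alpha> p :: real
  assumes "\<alpha> > 0" and "1 < p"
  shows "(SUP gh \<in> gaussians \<alpha> \<times> gaussians \<alpha>. ereal (Rratio p \<alpha> (fst gh) (snd gh)))
           = ereal (sqrt (Cp p))"
proof (rule antisym)
  show "(SUP gh \<in> gaussians \<alpha> \<times> gaussians \<alpha>. ereal (Rratio p \<alpha> (fst gh) (snd gh))) \<le> ereal (sqrt (Cp p))"
  proof (rule SUP_least)
    fix gh
    assume "gh \<in> gaussians \<alpha> \<times> gaussians \<alpha>"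
    then obtain a b c d where "cmod c < 1" "cmod d < 1" "gh = (gauss_exp \<alpha> a c, gauss_exp \<alpha> b d)"
      unfolding gaussians_eq by blast
    then show "ereal (Rratio p \<alpha> (fst gh) (snd gh)) \<le> ereal (sqrt (Cp p))"
      using Rratio_gauss_exp_le assms by simp
  qed
  have "\<forall>\<^sub>F t in at_right 0.
      ereal (Rratio p \<alpha> (gauss_exp \<alpha> 0 (of_real (1 - t / p))) (gauss_exp \<alpha> 0 (of_real (1 - t / conj_exp p))))
      \<le> (SUP gh \<in> gaussians \<alpha> \<times> gaussians \<alpha>. ereal (Rratio p \<alpha> (fst gh) (snd gh)))"
    using eventually_at_right_real[OF zero_less_one]
    by eventually_elim (use gauss_exp_real_pair_in_gaussians[OF assms(2)] in \<open>force intro: SUP_upper2\<close>)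
  then show "ereal (sqrt (Cp p)) \<le> (SUP gh \<in> gaussians \<alpha> \<times> gaussians \<alpha>. ereal (Rratio p \<alpha> (fst gh) (snd gh)))"
    using Rratio_gauss_exp_tendsto_sqrt_Cp[OF assms]
    by (intro tendsto_le[OF trivial_limit_at_right_real tendsto_const]) (auto intro: tendsto_ereal)
qed

end
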